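(* Let $A$ be a finite set and $v:2^A\to\mathbb{R}_{\ge0}$ a monotone subadditive function with $v(\emptyset)=0$. Let $S_1,\dots,S_N$ enumerate all subsets of $A$ ($N=2^{|A|}$). For each $S\subseteq A$ define $\tilde v(S)$ to be the optimal value of the linear program $$\min \sum_{j=1}^N \alpha_j\, v(S_j)\quad\text{s.t.}\quad \alpha_j\ge 0\ (1\le j\le N),\qquad \sum_{j:\, i\in S_j}\alpha_j\ge 1\ \ \forall i\in S.$$ Then $\tilde v(\cdot)$ is an XOS (fractionally subadditive) function.
   Context: A function $w:2^A\to\mathbb{R}_{\ge 0}$ is XOS (equivalently fractionally subadditive) if for every $S\subseteq A$ and every family of weights $0\le x(T)\le 1$ ($T\subseteq A$) with $\sum_{T:\, i\in T}x(T)\ge 1$ for all $i\in S$, we have $w(S)\le\sum_{T\subseteq A}x(T)\,w(T)$; equivalently, $w$ is the pointwise maximum of finitely many nonnegative additive functions. *)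

theory Defs
  imports Complex_Main
begin

definition xos :: "'a set \<Rightarrow> ('a set \<Rightarrow> real) \<Rightarrow> bool" where
  "xos A w \<longleftrightarrow>
     (\<forall>S. S \<subseteq> A \<longrightarrow> w S \<ge> 0) \<and>
     (\<forall>S x. S \<subseteq> A \<longrightarrow>
        (\<forall>T. T \<subseteq> A \<longrightarrow> 0 \<le> x T \<and> x T \<le> 1) \<longrightarrow>
        (\<forall>i\<in>S. (\<Sum>T\<in>{T. T \<subseteq> A \<and> i \<in> T}. x T) \<ge> 1) \<longrightarrow>
        w S \<le> (\<Sum>T\<in>Pow A. x T * w T))"

definition lp_value :: "'a set \<Rightarrow> ('a set \<Rightarrow> real) \<Rightarrow> 'a set \<Rightarrow> real" where
  "lp_value A v S = Inf {(\<Sum>T\<in>Pow A. \<alpha> T * v T) | \<alpha>.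
      (\<forall>T\<in>Pow A. \<alpha> T \<ge> 0) \<and>
      (\<forall>i\<in>S. (\<Sum>T\<in>{T. T \<subseteq> A \<and> i \<in> T}. \<alpha> T) \<ge> 1)}"

end

theory Submission
  imports Defs
begin

text \<open>If x covers S fractionally and every T is covered by a near-optimal fractional cover a T,
  then substituting a T for each T in x yields a fractional cover of S whose cost is the
  x-weighted sum of the costs of the a T. Hence lp_value is fractionally subadditive up to an
  arbitrarily small error, and so exactly.\<close>

definition fractional_cover :: "'a set \<Rightarrow> 'a set \<Rightarrow> ('a set \<Rightarrow> real) \<Rightarrow> bool" where
  "fractional_cover A S \<alpha> \<longleftrightarrow> (\<forall>T\<in>Pow A. \<alpha> T \<ge> 0) \<and>
      (\<forall>i\<in>S. (\<Sum>T\<in>{T. T \<subseteq> A \<and> i \<in> T}. \<alpha> T) \<ge> 1)"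

definition cover_cost :: "'a set \<Rightarrow> ('a set \<Rightarrow> real) \<Rightarrow> ('a set \<Rightarrow> real) \<Rightarrow> real" where
  "cover_cost A v \<alpha> = (\<Sum>T\<in>Pow A. \<alpha> T * v T)"

lemma lp_value_eq_Inf_cover_cost:
  "lp_value A v S = Inf (cover_cost A v ` {\<alpha>. fractional_cover A S \<alpha>})"
  unfolding lp_value_def fractional_cover_def cover_cost_def by (rule arg_cong[of _ _ Inf]) auto

lemma fractional_cover_const_one:
  assumes "finite A" "S \<subseteq> A"
  shows "fractional_cover A S (\<lambda>_. 1)"
  unfolding fractional_cover_def
proof (intro conjI ballI)
  fix i assume "i \<in> S"
  then have "{i} \<in> {T. T \<subseteq> A \<and> i \<in> T}" using assms(2) by auto
  moreover have "finite {T. T \<subseteq> A \<and> i \<in> T}" using assms(1) by auto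
  ultimately have "card {T. T \<subseteq> A \<and> i \<in> T} \<ge> 1"
    by (metis One_nat_def Suc_leI card_gt_0_iff empty_iff)
  then show "(\<Sum>T\<in>{T. T \<subseteq> A \<and> i \<in> T}. (1::real)) \<ge> 1" by simp
qed simp

lemma cover_cost_nonneg:
  assumes "\<forall>S. S \<subseteq> A \<longrightarrow> v S \<ge> 0" "fractional_cover A S \<alpha>"
  shows "cover_cost A v \<alpha> \<ge> 0"
  using assms unfolding fractional_cover_def cover_cost_def by (auto intro!: sum_nonneg)

lemma bdd_below_cover_cost:
  assumes "\<forall>S. S \<subseteq> A \<longrightarrow> v S \<ge> 0"
  shows "bdd_below (cover_cost A v ` {\<alpha>. fractional_cover A S \<alpha>})"
  using cover_cost_nonneg[OF assms] by (intro bdd_belowI[of _ 0]) auto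

lemma lp_value_le_cover_cost:
  assumes "\<forall>S. S \<subseteq> A \<longrightarrow> v S \<ge> 0" "fractional_cover A S \<alpha>"
  shows "lp_value A v S \<le> cover_cost A v \<alpha>"
  unfolding lp_value_eq_Inf_cover_cost
  using assms(2) by (intro cInf_lower[OF _ bdd_below_cover_cost[OF assms(1)]]) auto

lemma lp_value_nonneg:
  assumes "finite A" "\<forall>S. S \<subseteq> A \<longrightarrow> v S \<ge> 0" "S \<subseteq> A"
  shows "lp_value A v S \<ge> 0"
  unfolding lp_value_eq_Inf_cover_cost
  using fractional_cover_const_one[OF assms(1,3)] cover_cost_nonneg[OF assms(2)]
  by (intro cInf_greatest) auto

lemma near_optimal_fractional_cover:
  assumes "finite A" "S \<subseteq> A" "d > 0"
  obtains \<alpha> where "fractional_cover A S \<alpha>" "cover_cost A v \<alpha> < lp_value A v S + d"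
proof -
  have "Inf (cover_cost A v ` {\<alpha>. fractional_cover A S \<alpha>}) < lp_value A v S + d"
    using assms(3) by (simp add: lp_value_eq_Inf_cover_cost)
  from cInf_lessD[OF _ this] fractional_cover_const_one[OF assms(1,2)] that show ?thesis
    by blast
qed

lemma fractional_cover_compose:
  assumes "finite A"
    and x_nonneg: "\<forall>T\<in>Pow A. x T \<ge> 0"
    and x_cover: "\<forall>i\<in>S. (\<Sum>T\<in>{T. T \<subseteq> A \<and> i \<in> T}. x T) \<ge> 1"
    and a_cover: "\<forall>T\<in>Pow A. fractional_cover A T (a T)"
  shows "fractional_cover A S (\<lambda>U. \<Sum>T\<in>Pow A. x T * a T U)"
  unfolding fractional_cover_def
proof (intro conjI ballI)
  fix U assume "U \<in> Pow A"
  then show "0 \<le> (\<Sum>T\<in>Pow A. x T * a T U)"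
    using x_nonneg a_cover unfolding fractional_cover_def by (auto intro!: sum_nonneg)
next
  fix i assume "i \<in> S"
  let ?C = "{T. T \<subseteq> A \<and> i \<in> T}"
  have a_C_nonneg: "(\<Sum>U\<in>?C. a T U) \<ge> 0" if "T \<in> Pow A" for T
    using a_cover that unfolding fractional_cover_def by (auto intro!: sum_nonneg)
  have "1 \<le> (\<Sum>T\<in>?C. x T)"
    using x_cover \<open>i \<in> S\<close> by blast
  also have "\<dots> \<le> (\<Sum>T\<in>?C. x T * (\<Sum>U\<in>?C. a T U))"
  proof (rule sum_mono)
    fix T assume "T \<in> ?C"
    then have "(\<Sum>U\<in>?C. a T U) \<ge> 1" "x T \<ge> 0"
      using a_cover x_nonneg unfolding fractional_cover_def by auto
    then show "x T \<le> x T * (\<Sum>U\<in>?C. a T U)"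
      by (metis mult.right_neutral mult_left_mono)
  qed
  also have "\<dots> \<le> (\<Sum>T\<in>Pow A. x T * (\<Sum>U\<in>?C. a T U))"
    using assms(1) x_nonneg a_C_nonneg by (intro sum_mono2) auto
  also have "\<dots> = (\<Sum>U\<in>?C. \<Sum>T\<in>Pow A. x T * a T U)"
    unfolding sum_distrib_left by (rule sum.swap)
  finally show "1 \<le> (\<Sum>U\<in>?C. \<Sum>T\<in>Pow A. x T * a T U)" .
qed

lemma cover_cost_compose:
  "cover_cost A v (\<lambda>U. \<Sum>T\<in>Pow A. x T * a T U) = (\<Sum>T\<in>Pow A. x T * cover_cost A v (a T))"
  unfolding cover_cost_def
  unfolding sum_distrib_left sum_distrib_right mult.assoc by (rule sum.swap)

lemma lp_value_fractionally_subadditive: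
  assumes "finite A" "\<forall>S. S \<subseteq> A \<longrightarrow> v S \<ge> 0"
    and x_nonneg: "\<forall>T\<in>Pow A. x T \<ge> 0"
    and x_cover: "\<forall>i\<in>S. (\<Sum>T\<in>{T. T \<subseteq> A \<and> i \<in> T}. x T) \<ge> 1"
  shows "lp_value A v S \<le> (\<Sum>T\<in>Pow A. x T * lp_value A v T)"
proof (rule field_le_epsilon)
  fix e :: real assume "0 < e"
  define X where "X = (\<Sum>T\<in>Pow A. x T)"
  have "X \<ge> 0" unfolding X_def using x_nonneg by (auto intro!: sum_nonneg)
  define d where "d = e / (X + 1)"
  have "d > 0" unfolding d_def using \<open>0 < e\<close> \<open>X \<ge> 0\<close> by simp
  have "\<forall>T\<in>Pow A. \<exists>\<alpha>. fractional_cover A T \<alpha> \<and> cover_cost A v \<alpha> < lp_value A v T + d"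
    by (metis PowD near_optimal_fractional_cover[OF assms(1) _ \<open>d > 0\<close>])
  then obtain a where a_cover: "\<forall>T\<in>Pow A. fractional_cover A T (a T)"
    and a_cost: "\<forall>T\<in>Pow A. cover_cost A v (a T) < lp_value A v T + d"
    by metis
  have "lp_value A v S \<le> (\<Sum>T\<in>Pow A. x T * cover_cost A v (a T))"
    using lp_value_le_cover_cost[OF assms(2) fractional_cover_compose[OF assms(1) x_nonneg x_cover a_cover]]
    by (simp add: cover_cost_compose)
  also have "\<dots> \<le> (\<Sum>T\<in>Pow A. x T * (lp_value A v T + d))"
    using a_cost x_nonneg by (intro sum_mono mult_left_mono) (auto intro: less_imp_le)
  also have "\<dots> = (\<Sum>T\<in>Pow A. x T * lp_value A v T) + d * X"
    unfolding X_def by (simp add: distrib_left sum.distrib sum_distrib_left mult.commute)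
  also have "d * X \<le> e"
    unfolding d_def using \<open>0 < e\<close> \<open>X \<ge> 0\<close> by (simp add: field_simps)
  finally show "lp_value A v S \<le> (\<Sum>T\<in>Pow A. x T * lp_value A v T) + e" by simp
qed

theorem lemma3p4:
  fixes A :: "'a set" and v :: "'a set \<Rightarrow> real"
  assumes "finite A"
    and "\<forall>S. S \<subseteq> A \<longrightarrow> v S \<ge> 0"
    and "v {} = 0"
    and "\<forall>S T. S \<subseteq> T \<and> T \<subseteq> A \<longrightarrow> v S \<le> v T"
    and "\<forall>S T. S \<subseteq> A \<and> T \<subseteq> A \<longrightarrow> v (S \<union> T) \<le> v S + v T"
  shows "xos A (lp_value A v)"
  unfolding xos_def
  using lp_value_nonneg[OF assms(1,2)] lp_value_fractionally_subadditive[OF assms(1,2)]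
  by auto

end
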